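(* Let $G=(V,E)$ be a graph, $v\in V$, and $S_v$ the partial star product of $v$. Then: (1) if $e,f\in E_v$ and $(e,f)\in\mathfrak d_v^*$, there is no square in $S_v$ spanned by $e$ and $f$; (2) every square ($4$-cycle) in $S_v$ contains two edges of $E_v$ and two edges of $F_v$, and every edge $f\in F_v$ is the opposite edge of some primal edge $e\in E_v$ in a chordless square of $S_v$; (3) every non-primal vertex of $S_v$ is the unique top vertex of some square spanned by two edges $e,e'\in E_v$ (i.e. a top vertex $x$ of a square $v,u,x,w$ such that $u,w$ are the only common neighbours of $v$ and $x$).
   Context: All graphs are finite, simple and undirected. For a graph $G=(V,E)$ and $v\in V$, $E_v$ denotes the set of edges incident to $v$. For two distinct adjacent edges $e=(v,u)$, $f=(v,w)$, a square spanned by $e$ and $f$ is a $4$-cycle $v,u,x,w,v$ with $x\notin\{v,u,w\}$; $x$ is its top vertex. The square is chordless if neither $(u,w)$ nor $(v,x)$ is an edge of $G$. In a chordless square $v,u,x,w$, $(x,w)$ is the opposite edge of $(v,u)$ and $(x,u)$ is the opposite edge of $(v,w)$ (and vice versa). The relation $\delta(G)\subseteq E\times E$: $(e,f)\in\delta(G)$ iff (i) $e,f$ are distinct adjacent edges and it is not the case that $e$ and $f$ span exactly one square and that square is chordless; or (ii) $e,f$ are opposite edges of a chordless square; or (iii) $e=f$. Define $\mathfrak d_v=((E_v\times E)\cup(E\times E_v))\cap\delta(G)$ and $\mathfrak d_v^*$ the finest equivalence relation on $E$ containing $\mathfrak d_v$. Let $F_v\subseteq E\setminus E_v$ be the set of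 edges that are the edges not incident to $v$ of some chordless square spanned by two edges $e,e'\in E_v$ with $(e,e')\notin\mathfrak d_v^*$. The partial star product $S_v$ is the subgraph of $G$ with edge set $E_v\cup F_v$ and vertex set the endpoints of these edges; neighbours of $v$ are primal vertices, and the other vertices of $S_v$ distinct from $v$ are non-primal vertices. *)

theory Defs
  imports Main
begin

definition graph :: "'a set \<Rightarrow> 'a set set \<Rightarrow> bool" where
  "graph V E \<longleftrightarrow> finite V \<and>
     (\<forall>e\<in>E. \<exists>u w. e = {u, w} \<and> u \<noteq> w \<and> u \<in> V \<and> w \<in> V)"

definition incid :: "'a set set \<Rightarrow> 'a \<Rightarrow> 'a set set" where
  "incid E v = {e \<in> E. v \<in> e}"

definition sq :: "'a set set \<Rightarrow> 'a \<Rightarrow> 'a \<Rightarrow> 'a \<Rightarrow> 'a \<Rightarrow> bool" where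
  "sq E a b c d \<longleftrightarrow> distinct [a, b, c, d] \<and>
     {a, b} \<in> E \<and> {b, c} \<in> E \<and> {c, d} \<in> E \<and> {d, a} \<in> E"

definition chordless_sq :: "'a set set \<Rightarrow> 'a \<Rightarrow> 'a \<Rightarrow> 'a \<Rightarrow> 'a \<Rightarrow> bool" where
  "chordless_sq E a b c d \<longleftrightarrow> sq E a b c d \<and> {a, c} \<notin> E \<and> {b, d} \<notin> E"

definition tops :: "'a set set \<Rightarrow> 'a set \<Rightarrow> 'a set \<Rightarrow> 'a set" where
  "tops E e f = {x. \<exists>v u w. e = {v, u} \<and> f = {v, w} \<and> sq E v u x w}"

definition unique_chordless :: "'a set set \<Rightarrow> 'a set \<Rightarrow> 'a set \<Rightarrow> bool" where
  "unique_chordless E e f \<longleftrightarrow> (\<exists>x. tops E e f = {x} \<and>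
     (\<exists>v u w. e = {v, u} \<and> f = {v, w} \<and> chordless_sq E v u x w))"

definition opposite :: "'a set set \<Rightarrow> 'a set \<Rightarrow> 'a set \<Rightarrow> bool" where
  "opposite E e f \<longleftrightarrow> (\<exists>a b c d. chordless_sq E a b c d \<and> e = {a, b} \<and> f = {c, d})"

definition delta :: "'a set set \<Rightarrow> ('a set \<times> 'a set) set" where
  "delta E = {(e, f). e \<in> E \<and> f \<in> E \<and>
     ((e \<noteq> f \<and> e \<inter> f \<noteq> {} \<and> \<not> unique_chordless E e f) \<or> opposite E e f \<or> e = f)}"

definition dv :: "'a set set \<Rightarrow> 'a \<Rightarrow> ('a set \<times> 'a set) set" where
  "dv E v = ((incid E v \<times> E) \<union> (E \<times> incid E v)) \<inter> delta E"

definition dvstar :: "'a set set \<Rightarrow> 'a \<Rightarrow> ('a set \<times> 'a set) set" where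
  "dvstar E v = \<Inter> {R. equiv E R \<and> dv E v \<subseteq> R}"

definition Fv :: "'a set set \<Rightarrow> 'a \<Rightarrow> 'a set set" where
  "Fv E v = {f \<in> E - incid E v. \<exists>u x w. chordless_sq E v u x w \<and>
      ({v, u}, {v, w}) \<notin> dvstar E v \<and> (f = {u, x} \<or> f = {x, w})}"

definition Sv_edges :: "'a set set \<Rightarrow> 'a \<Rightarrow> 'a set set" where
  "Sv_edges E v = incid E v \<union> Fv E v"

definition Sv_verts :: "'a set set \<Rightarrow> 'a \<Rightarrow> 'a set" where
  "Sv_verts E v = \<Union> (Sv_edges E v)"

end

theory Submission
  imports Defs
begin

text \<open>
  Let v,u,x,w be a chordless square whose primal edges
  vu, vw are not related by \<open>dvstar\<close>. Then u and w are the only common neighbours of v and x: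
  a third one y would be the top of a second square spanned by vu and ux, so vu and ux are
  \<open>delta\<close>-related; and ux is opposite to vw, so vu and vw would be related after all.
  Consequently such squares survive in S_v as chordless squares, which gives (3) and the
  second half of (2), and a square of S_v on two related primal edges would contradict the
  observation, which gives (1). Finally a square of S_v avoiding v would consist of F_v edges
  alternating between primal and non-primal vertices, and the two primal vertices would
  span two distinct squares, although unrelated primal edges span exactly one.
\<close>

lemma dvstar_sym: "(e, f) \<in> dvstar E v \<Longrightarrow> (f, e) \<in> dvstar E v"
  unfolding dvstar_def equiv_def by (auto dest: symD)

lemma dvstar_trans: "(e, f) \<in> dvstar E v \<Longrightarrow> (f, g) \<in> dvstar E v \<Longrightarrow> (e, g) \<in> dvstar E v"
  unfolding dvstar_def equiv_def by (auto dest: transD)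

lemma delta_incid_in_dvstar:
  assumes "(e, f) \<in> delta E" and "e \<in> incid E v"
  shows "(e, f) \<in> dvstar E v"
proof -
  have "(e, f) \<in> dv E v" using assms by (auto simp: dv_def delta_def incid_def)
  thus ?thesis unfolding dvstar_def by blast
qed

lemma graph_edge_distinct: "graph V E \<Longrightarrow> {a, b} \<in> E \<Longrightarrow> a \<noteq> b"
  unfolding graph_def by (force simp: doubleton_eq_iff)

lemma sq_rotate: "sq E a b c d \<Longrightarrow> sq E b c d a"
  by (auto simp: sq_def insert_commute)

lemma chordless_sq_reverse: "chordless_sq E a b c d \<Longrightarrow> chordless_sq E a d c b"
  by (auto simp: chordless_sq_def sq_def insert_commute)

lemma sq_rotate_to_vertex:
  assumes "sq E a b c d" and "v \<in> {a, b, c, d}"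
  obtains p q r where "sq E v p q r"
    and "{{a, b}, {b, c}, {c, d}, {d, a}} = {{v, p}, {p, q}, {q, r}, {r, v}}"
proof -
  have r1: "sq E b c d a" using sq_rotate[OF assms(1)] .
  have r2: "sq E c d a b" using sq_rotate[OF r1] .
  have "sq E d a b c" using sq_rotate[OF r2] .
  with r1 r2 assms that show thesis by (auto simp: insert_commute)
qed

lemma Fv_edge_avoids_center: "f \<in> Fv E v \<Longrightarrow> v \<notin> f"
  by (auto simp: Fv_def incid_def)

lemma Sv_edges_in_E: "e \<in> Sv_edges E v \<Longrightarrow> e \<in> E"
  unfolding Sv_edges_def incid_def Fv_def by blast

lemma Sv_edge_in_Fv: "e \<in> Sv_edges E v \<Longrightarrow> v \<notin> e \<Longrightarrow> e \<in> Fv E v"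
  by (auto simp: Sv_edges_def incid_def)

lemma FvE:
  assumes "f \<in> Fv E v"
  obtains u x w where "chordless_sq E v u x w" and "({v, u}, {v, w}) \<notin> dvstar E v"
    and "f = {u, x}"
proof -
  from assms obtain u x w where c: "chordless_sq E v u x w"
    and n: "({v, u}, {v, w}) \<notin> dvstar E v" and f: "f = {u, x} \<or> f = {x, w}"
    unfolding Fv_def by blast
  show thesis
  proof (cases "f = {u, x}")
    case True
    with c n that show thesis by blast
  next
    case False
    with f have "f = {w, x}" by (auto simp: insert_commute)
    moreover have "({v, w}, {v, u}) \<notin> dvstar E v" using n by (metis dvstar_sym)
    ultimately show thesis using that chordless_sq_reverse[OF c] by blast
  qed
qed

lemma Fv_edge_primal_endpoint:
  assumes "f \<in> Fv E v"
  obtains p q where "f = {p, q}" and "{v, p} \<in> E" and "{v, q} \<notin> E"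
  using assms by (elim FvE) (auto simp: chordless_sq_def sq_def)

lemma common_neighbours_chordless_sq:
  assumes g: "graph V E" and c: "chordless_sq E v u x w"
    and n: "({v, u}, {v, w}) \<notin> dvstar E v"
  shows "{y. {v, y} \<in> E \<and> {x, y} \<in> E} = {u, w}"
proof
  from c have d: "distinct [v, u, x, w]"
    and edges: "{v, u} \<in> E" "{u, x} \<in> E" "{x, w} \<in> E" "{w, v} \<in> E"
    unfolding chordless_sq_def sq_def by auto
  show "{u, w} \<subseteq> {y. {v, y} \<in> E \<and> {x, y} \<in> E}"
    using edges by (auto simp: insert_commute)
  show "{y. {v, y} \<in> E \<and> {x, y} \<in> E} \<subseteq> {u, w}"
  proof (rule subsetI, rule ccontr)
    fix y assume y: "y \<in> {y. {v, y} \<in> E \<and> {x, y} \<in> E}" and "y \<notin> {u, w}"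
    with g have "y \<notin> {u, w, v, x}" by (auto dest: graph_edge_distinct)
    with y d edges have "sq E u v w x" "sq E u v y x"
      unfolding sq_def by (auto simp: insert_commute)
    hence "{w, y} \<subseteq> tops E {v, u} {u, x}"
      unfolding tops_def using insert_commute[of v u] by blast
    with \<open>y \<notin> {u, w}\<close> have "\<not> unique_chordless E {v, u} {u, x}"
      unfolding unique_chordless_def by auto
    moreover have "{v, u} \<noteq> {u, x}" using d by (auto simp: doubleton_eq_iff)
    ultimately have "({v, u}, {u, x}) \<in> delta E" unfolding delta_def using edges by auto
    hence vu_ux: "({v, u}, {u, x}) \<in> dvstar E v"
      using edges by (auto intro: delta_incid_in_dvstar simp: incid_def)
    have "opposite E {v, w} {u, x}" unfolding opposite_def
      using chordless_sq_reverse[OF c] by (auto simp: insert_commute)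
    hence "({v, w}, {u, x}) \<in> delta E" unfolding delta_def using edges by (auto simp: insert_commute)
    hence "({v, w}, {u, x}) \<in> dvstar E v"
      using edges by (auto intro: delta_incid_in_dvstar simp: incid_def insert_commute)
    with vu_ux n show False by (blast dest: dvstar_sym dvstar_trans)
  qed
qed

text \<open>Two primal edges that are not \<open>dvstar\<close>-related are not \<open>delta\<close>-related either, so they
  span exactly one square.\<close>

lemma tops_unique_if_not_dvstar:
  assumes "{v, a} \<in> E" and "{v, c} \<in> E" and n: "({v, a}, {v, c}) \<notin> dvstar E v"
    and "x \<in> tops E {v, a} {v, c}" and "y \<in> tops E {v, a} {v, c}"
  shows "x = y"
proof -
  have "({v, a}, {v, c}) \<notin> delta E"
    using n assms(1) by (auto intro: delta_incid_in_dvstar simp: incid_def)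
  hence "unique_chordless E {v, a} {v, c}"
    using assms(1,2) unfolding delta_def by auto
  then obtain t where "tops E {v, a} {v, c} = {t}" unfolding unique_chordless_def by auto
  with assms(4,5) show ?thesis by auto
qed

lemma chordless_sq_in_Sv:
  assumes c: "chordless_sq E v u x w" and n: "({v, u}, {v, w}) \<notin> dvstar E v"
  shows "chordless_sq (Sv_edges E v) v u x w"
proof -
  from c have d: "distinct [v, u, x, w]"
    and edges: "{v, u} \<in> E" "{u, x} \<in> E" "{x, w} \<in> E" "{w, v} \<in> E"
    unfolding chordless_sq_def sq_def by auto
  have "{u, x} \<in> Fv E v" "{x, w} \<in> Fv E v"
    unfolding Fv_def incid_def using c n d edges by auto
  moreover have "{v, u} \<in> incid E v" "{w, v} \<in> incid E v" using edges by (auto simp: incid_def)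
  ultimately show ?thesis using c d Sv_edges_in_E[of _ E v]
    unfolding chordless_sq_def sq_def Sv_edges_def by auto
qed

lemma no_Sv_sq_if_dvstar:
  assumes g: "graph V E" and "({v, u}, {v, w}) \<in> dvstar E v"
  shows "\<not> sq (Sv_edges E v) v u x w"
proof
  assume s: "sq (Sv_edges E v) v u x w"
  hence d: "distinct [v, u, x, w]" and ux: "{u, x} \<in> Sv_edges E v"
    and vu: "{v, u} \<in> E" and vw: "{v, w} \<in> E" and xw: "{x, w} \<in> E"
    using Sv_edges_in_E unfolding sq_def by (auto simp: insert_commute)
  have "{u, x} \<in> Fv E v" using Sv_edge_in_Fv[OF ux] d by auto
  then obtain u' x' w' where c: "chordless_sq E v u' x' w'"
    and n: "({v, u'}, {v, w'}) \<notin> dvstar E v" and eq: "{u, x} = {u', x'}"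
    by (elim FvE)
  have "{v, x'} \<notin> E" using c unfolding chordless_sq_def by auto
  with eq vu have "u = u'" "x = x'" by (auto simp: doubleton_eq_iff)
  with common_neighbours_chordless_sq[OF g c n] vw xw d have "w = w'"
    by (auto simp: insert_commute)
  with n assms(2) \<open>u = u'\<close> show False by simp
qed

text \<open>The F_v edges ab, bc of a square avoiding v alternate between a primal vertex a and a
  non-primal vertex b, so c is primal as well, and both b and d are tops over va, vc.\<close>

lemma no_Sv_sq_avoiding_center_with_primal:
  assumes g: "graph V E" and s: "sq (Sv_edges E v) a b c d" and nv: "v \<notin> {a, b, c, d}"
    and va: "{v, a} \<in> E"
  shows False
proof -
  from s have d: "distinct [a, b, c, d]" and S: "{a, b} \<in> Sv_edges E v"
    "{b, c} \<in> Sv_edges E v" "{c, d} \<in> Sv_edges E v" "{d, a} \<in> Sv_edges E v"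
    unfolding sq_def by auto
  have F: "{a, b} \<in> Fv E v" "{b, c} \<in> Fv E v"
    using S(1,2) nv by (auto intro: Sv_edge_in_Fv)
  have edges: "{a, b} \<in> E" "{b, c} \<in> E" "{c, d} \<in> E" "{d, a} \<in> E"
    using S by (auto intro: Sv_edges_in_E)
  obtain u x w where c: "chordless_sq E v u x w" and n: "({v, u}, {v, w}) \<notin> dvstar E v"
    and eq: "{a, b} = {u, x}"
    using F(1) by (elim FvE)
  have "{v, x} \<notin> E" using c unfolding chordless_sq_def by auto
  with eq va have ab: "a = u" "b = x" by (auto simp: doubleton_eq_iff)
  obtain p q where "{b, c} = {p, q}" "{v, p} \<in> E" "{v, q} \<notin> E"
    using F(2) by (elim Fv_edge_primal_endpoint)
  with ab \<open>{v, x} \<notin> E\<close> have vc: "{v, c} \<in> E" by (auto simp: doubleton_eq_iff)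
  with common_neighbours_chordless_sq[OF g c n] edges ab d have cw: "c = w" by auto
  have "b \<in> tops E {v, a} {v, c}" unfolding tops_def using c ab cw
    unfolding chordless_sq_def by auto
  moreover have "sq E v a d c"
    using d edges nv va vc unfolding sq_def by (auto simp: insert_commute)
  hence "d \<in> tops E {v, a} {v, c}" unfolding tops_def by blast
  ultimately have "b = d" using tops_unique_if_not_dvstar[OF va vc] n ab cw by auto
  with d show False by auto
qed

lemma Sv_sq_through_center:
  assumes g: "graph V E" and s: "sq (Sv_edges E v) a b c d"
  shows "v \<in> {a, b, c, d}"
proof (rule ccontr)
  assume nv: "v \<notin> {a, b, c, d}"
  have "{a, b} \<in> Fv E v" using s nv by (auto simp: sq_def intro: Sv_edge_in_Fv)
  then obtain p q where "{a, b} = {p, q}" and "{v, p} \<in> E" by (elim Fv_edge_primal_endpoint)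
  hence "{v, a} \<in> E \<or> {v, b} \<in> E" by (auto simp: doubleton_eq_iff)
  thus False
  proof
    assume "{v, a} \<in> E"
    with no_Sv_sq_avoiding_center_with_primal[OF g s nv] show False .
  next
    assume "{v, b} \<in> E"
    with no_Sv_sq_avoiding_center_with_primal[OF g sq_rotate[OF s]] nv show False by auto
  qed
qed

lemma Sv_sq_at_center_edge_counts:
  assumes s: "sq (Sv_edges E v) v b c d"
  shows "card ({{v, b}, {b, c}, {c, d}, {d, v}} \<inter> incid E v) = 2 \<and>
         card ({{v, b}, {b, c}, {c, d}, {d, v}} \<inter> Fv E v) = 2"
proof -
  from s have d: "distinct [v, b, c, d]" and S: "{v, b} \<in> Sv_edges E v"
    "{b, c} \<in> Sv_edges E v" "{c, d} \<in> Sv_edges E v" "{d, v} \<in> Sv_edges E v"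
    unfolding sq_def by auto
  have "{v, b} \<in> E" "{d, v} \<in> E" using S(1,4) by (auto intro: Sv_edges_in_E)
  with d have "{{v, b}, {b, c}, {c, d}, {d, v}} \<inter> incid E v = {{v, b}, {d, v}}"
    by (auto simp: incid_def)
  moreover have "{b, c} \<in> Fv E v" "{c, d} \<in> Fv E v"
    using S(2,3) d by (auto intro: Sv_edge_in_Fv)
  hence "{{v, b}, {b, c}, {c, d}, {d, v}} \<inter> Fv E v = {{b, c}, {c, d}}"
    using Fv_edge_avoids_center[of "{v, b}" E v] Fv_edge_avoids_center[of "{d, v}" E v] by blast
  moreover have "{v, b} \<noteq> {d, v}" "{b, c} \<noteq> {c, d}" using d by (auto simp: doubleton_eq_iff)
  ultimately show ?thesis by simp
qed

lemma Sv_sq_edge_counts: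
  assumes "graph V E" and s: "sq (Sv_edges E v) a b c d"
  shows "card ({{a, b}, {b, c}, {c, d}, {d, a}} \<inter> incid E v) = 2 \<and>
         card ({{a, b}, {b, c}, {c, d}, {d, a}} \<inter> Fv E v) = 2"
proof -
  obtain p q r where "sq (Sv_edges E v) v p q r"
    and "{{a, b}, {b, c}, {c, d}, {d, a}} = {{v, p}, {p, q}, {q, r}, {r, v}}"
    using sq_rotate_to_vertex[OF s Sv_sq_through_center[OF assms]] .
  thus ?thesis using Sv_sq_at_center_edge_counts by simp
qed

lemma Fv_opposite_primal_edge:
  assumes "f \<in> Fv E v"
  shows "\<exists>e\<in>incid E v. opposite (Sv_edges E v) e f"
proof -
  obtain u x w where c: "chordless_sq E v u x w" and n: "({v, u}, {v, w}) \<notin> dvstar E v"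
    and f: "f = {u, x}"
    using assms by (elim FvE)
  have "chordless_sq (Sv_edges E v) v w x u"
    using chordless_sq_reverse[OF chordless_sq_in_Sv[OF c n]] .
  hence "opposite (Sv_edges E v) {v, w} f"
    unfolding opposite_def f by (auto simp: insert_commute)
  moreover have "{v, w} \<in> incid E v"
    using c unfolding chordless_sq_def sq_def incid_def by (auto simp: insert_commute)
  ultimately show ?thesis by blast
qed

lemma nonprimal_vertex_unique_top:
  assumes g: "graph V E" and "x \<in> Sv_verts E v" and "x \<noteq> v" and "{v, x} \<notin> E"
  shows "\<exists>u w. sq (Sv_edges E v) v u x w \<and> {y. {v, y} \<in> E \<and> {x, y} \<in> E} = {u, w}"
proof -
  obtain e where e: "e \<in> Sv_edges E v" "x \<in> e" using assms(2) unfolding Sv_verts_def by auto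
  have "v \<notin> e"
  proof
    assume "v \<in> e"
    moreover have "e \<in> E" using e by (auto intro: Sv_edges_in_E)
    ultimately have "e = {v, x}" using g e assms(3) unfolding graph_def by auto
    with \<open>e \<in> E\<close> assms(4) show False by simp
  qed
  with e have "e \<in> Fv E v" by (auto intro: Sv_edge_in_Fv)
  then obtain u x' w where c: "chordless_sq E v u x' w"
    and n: "({v, u}, {v, w}) \<notin> dvstar E v" and ex: "e = {u, x'}"
    by (elim FvE)
  have "{v, u} \<in> E" using c unfolding chordless_sq_def sq_def by auto
  with ex e assms(4) have "x = x'" by auto
  with chordless_sq_in_Sv[OF c n] common_neighbours_chordless_sq[OF g c n] show ?thesis
    unfolding chordless_sq_def by blast
qed

theorem corollary3p3:
  fixes V :: "'a set" and E :: "'a set set" and v :: 'a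
  assumes "graph V E" and "v \<in> V"
  shows "(\<forall>e\<in>incid E v. \<forall>f\<in>incid E v. (e, f) \<in> dvstar E v \<longrightarrow>
            \<not> (\<exists>u x w. e = {v, u} \<and> f = {v, w} \<and> sq (Sv_edges E v) v u x w))
       \<and> (\<forall>a b c d. sq (Sv_edges E v) a b c d \<longrightarrow>
            card ({{a, b}, {b, c}, {c, d}, {d, a}} \<inter> incid E v) = 2 \<and>
            card ({{a, b}, {b, c}, {c, d}, {d, a}} \<inter> Fv E v) = 2)
       \<and> (\<forall>f\<in>Fv E v. \<exists>e\<in>incid E v. opposite (Sv_edges E v) e f)
       \<and> (\<forall>x\<in>Sv_verts E v. x \<noteq> v \<and> {v, x} \<notin> E \<longrightarrow>
            (\<exists>u w. sq (Sv_edges E v) v u x w \<and>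
                   {y. {v, y} \<in> E \<and> {x, y} \<in> E} = {u, w}))"
proof (intro conjI ballI allI impI notI)
  fix e f assume "(e, f) \<in> dvstar E v"
    and "\<exists>u x w. e = {v, u} \<and> f = {v, w} \<and> sq (Sv_edges E v) v u x w"
  with no_Sv_sq_if_dvstar[OF assms(1)] show False by blast
next
  fix a b c d assume "sq (Sv_edges E v) a b c d"
  from Sv_sq_edge_counts[OF assms(1) this]
  show "card ({{a, b}, {b, c}, {c, d}, {d, a}} \<inter> incid E v) = 2"
    and "card ({{a, b}, {b, c}, {c, d}, {d, a}} \<inter> Fv E v) = 2" by simp_all
next
  show "\<exists>e\<in>incid E v. opposite (Sv_edges E v) e f" if "f \<in> Fv E v" for f
    using Fv_opposite_primal_edge[OF that] .
next
  fix x assume "x \<in> Sv_verts E v" and "x \<noteq> v \<and> {v, x} \<notin> E"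
  with nonprimal_vertex_unique_top[OF assms(1)]
  show "\<exists>u w. sq (Sv_edges E v) v u x w \<and> {y. {v, y} \<in> E \<and> {x, y} \<in> E} = {u, w}"
    by blast
qed

end
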